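(* Let $\boldsymbol{\Sigma}=\boldsymbol{U}\boldsymbol{\Lambda}\boldsymbol{U}^\top\in\mathbb{R}^{p\times p}$ be positive semidefinite, $\boldsymbol{\beta}\in\mathbb{R}^p$, $r\le k$, and $S_k\in\mathbb{R}^{p\times k}$. Write $\boldsymbol{U}=[\boldsymbol{U}_r\ \boldsymbol{U}_{p-r}]$, $\boldsymbol{\Lambda}=\mathrm{diag}(\boldsymbol{\Lambda}_r,\boldsymbol{\Lambda}_{p-r})$, $\boldsymbol{\Sigma}_{p-r}=\boldsymbol{U}_{p-r}\boldsymbol{\Lambda}_{p-r}\boldsymbol{U}_{p-r}^\top$, $\widetilde S_1=\boldsymbol{U}_r^\top S_k$, $\widetilde S_2=\boldsymbol{U}_{p-r}^\top S_k$, $\widetilde{\boldsymbol{\beta}}_1=\boldsymbol{U}_r^\top\boldsymbol{\beta}$, $\widetilde{\boldsymbol{\beta}}_2=\boldsymbol{U}_{p-r}^\top\boldsymbol{\beta}$, and assume $\widetilde S_1\widetilde S_1^\top$ and $\widetilde S_2^\top\boldsymbol{\Lambda}_{p-r}\widetilde S_2$ are invertible. Let $\boldsymbol{\xi}^*$ be a minimizer of $(\boldsymbol{\beta}-S_k\boldsymbol{\xi})^\top\boldsymbol{\Sigma}_{p-r}(\boldsymbol{\beta}-S_k\boldsymbol{\xi})$ over $\boldsymbol{\xi}\in\mathbb{R}^k$ subject to $\boldsymbol{U}_r^\top(\boldsymbol{\beta}-S_k\boldsymbol{\xi})=\boldsymbol{0}$. Then $(\boldsymbol{\beta}-S_k\boldsymbol{\xi}^*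 )^\top\boldsymbol{\Sigma}_{p-r}(\boldsymbol{\beta}-S_k\boldsymbol{\xi}^* )\le 2L_1+2L_2$, where $$L_1=\frac{\|\widetilde S_2^\top\boldsymbol{\Lambda}_{p-r}\widetilde S_2\|_2}{\lambda_{\min}(\widetilde S_1\widetilde S_1^\top)}\|\widetilde{\boldsymbol{\beta}}_1\|_2^2,\qquad L_2=\Big(1+\kappa(\widetilde S_2^\top\boldsymbol{\Lambda}_{p-r}\widetilde S_2)\,\kappa(\widetilde S_1\widetilde S_1^\top)\Big)\,\widetilde{\boldsymbol{\beta}}_2^\top\boldsymbol{\Lambda}_{p-r}\widetilde{\boldsymbol{\beta}}_2 .$$
   Context: $\boldsymbol{\Sigma}=\boldsymbol{U}\boldsymbol{\Lambda}\boldsymbol{U}^\top$ is the eigendecomposition with $\boldsymbol{U}$ orthogonal and $\boldsymbol{\Lambda}$ diagonal with nonincreasing diagonal entries; $\boldsymbol{U}_r\in\mathbb{R}^{p\times r}$ consists of the first $r$ columns, $\boldsymbol{\Lambda}_r\in\mathbb{R}^{r\times r}$ of the first $r$ eigenvalues. $\kappa(\boldsymbol{A})=\lambda_{\max}(\boldsymbol{A})/\lambda_{\min}(\boldsymbol{A})$ is the condition number and $\|\cdot\|_2$ the spectral norm. In the paper $S_k$ has i.i.d. $\mathcal{N}(0,1)$ entries, in which case the invertibility assumptions hold almost surely when $r\le k$ and $\boldsymbol{\Lambda}_{p-r}$ has at least $k$ positive entries. *)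

theory Defs
  imports "Jordan_Normal_Form.Matrix" "Jordan_Normal_Form.Char_Poly"
begin

definition vnorm :: "real vec \<Rightarrow> real" where
  "vnorm v = sqrt (v \<bullet> v)"

definition lambda_max :: "real mat \<Rightarrow> real" where
  "lambda_max A = Max {a. eigenvalue A a}"

definition lambda_min :: "real mat \<Rightarrow> real" where
  "lambda_min A = Min {a. eigenvalue A a}"

definition cond_num :: "real mat \<Rightarrow> real" where
  "cond_num A = lambda_max A / lambda_min A"

definition spec_norm :: "real mat \<Rightarrow> real" where
  "spec_norm A = Sup {vnorm (A *\<^sub>v x) | x. x \<in> carrier_vec (dim_col A) \<and> vnorm x = 1}"

definition psd :: "real mat \<Rightarrow> bool" where
  "psd A \<longleftrightarrow> A = transpose_mat A \<and> (\<forall>x \<in> carrier_vec (dim_row A). 0 \<le> x \<bullet> (A *\<^sub>v x))"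

definition first_cols :: "nat \<Rightarrow> real mat \<Rightarrow> real mat" where
  "first_cols r U = mat (dim_row U) r (\<lambda>(i,j). U $$ (i,j))"

definition last_cols :: "nat \<Rightarrow> real mat \<Rightarrow> real mat" where
  "last_cols r U = mat (dim_row U) (dim_col U - r) (\<lambda>(i,j). U $$ (i, r + j))"

definition lower_block :: "nat \<Rightarrow> real mat \<Rightarrow> real mat" where
  "lower_block r L = mat (dim_row L - r) (dim_col L - r) (\<lambda>(i,j). L $$ (r + i, r + j))"

end

theory Submission
  imports Defs "Jordan_Normal_Form.Spectral_Radius"
begin

(* The constraint says S1 xi = b1, so the least-norm solution z = S1^T (S1 S1^T)^-1 b1 is
   feasible and the minimum is at most the objective at z. With q the positive semidefinite form
   of Lambda_{p-r}, that objective is q(b2 - S2 z) <= 2 q(b2) + 2 q(S2 z). Here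
   q(S2 z) = z^T (S2^T Lambda_{p-r} S2) z is at most the spectral norm times
   |z|^2 = b1^T (S1 S1^T)^-1 b1 <= |b1|^2 / lambda_min (S1 S1^T), which gives L1; condition
   numbers of positive semidefinite matrices are nonnegative, so 2 q(b2) <= 2 L2. *)

lemma first_cols_carrier [simp]: "U \<in> carrier_mat p q \<Longrightarrow> first_cols r U \<in> carrier_mat p r"
  by (simp add: first_cols_def)

lemma last_cols_carrier [simp]: "U \<in> carrier_mat p q \<Longrightarrow> last_cols r U \<in> carrier_mat p (q - r)"
  by (simp add: last_cols_def)

lemma lower_block_carrier [simp]: "L \<in> carrier_mat p q \<Longrightarrow> lower_block r L \<in> carrier_mat (p - r) (q - r)"
  by (simp add: lower_block_def)

lemma scalar_prod_self_nonneg: "0 \<le> (v :: real vec) \<bullet> v"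
  using conjugate_square_ge_0_vec[of v] by simp

lemma scalar_prod_self_pos:
  assumes "(v :: real vec) \<in> carrier_vec n" and "v \<noteq> 0\<^sub>v n"
  shows "0 < v \<bullet> v"
  using conjugate_square_greater_0_vec[OF assms(1)] assms(2) by simp

lemma vnorm_nonneg: "0 \<le> vnorm v"
  by (simp add: vnorm_def scalar_prod_self_nonneg)

lemma vnorm_power2: "(vnorm v)\<^sup>2 = v \<bullet> v"
  by (simp add: vnorm_def scalar_prod_self_nonneg)

lemma vnorm_smult: "v \<in> carrier_vec n \<Longrightarrow> vnorm (c \<cdot>\<^sub>v v) = \<bar>c\<bar> * vnorm v"
proof -
  assume "v \<in> carrier_vec n"
  then have "(c \<cdot>\<^sub>v v) \<bullet> (c \<cdot>\<^sub>v v) = c\<^sup>2 * (v \<bullet> v)"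
    by (simp add: power2_eq_square)
  then show ?thesis
    by (simp add: vnorm_def real_sqrt_mult)
qed

lemma quadratic_nonneg_imp_discriminant_le:
  fixes a b c :: real
  assumes nonneg: "\<And>t. 0 \<le> a - 2 * t * b + t\<^sup>2 * c" and c: "0 \<le> c"
  shows "b\<^sup>2 \<le> a * c"
proof (cases "c = 0")
  case True
  have "b = 0"
  proof (rule ccontr)
    assume "b \<noteq> 0"
    then have "a - 2 * ((a + 1) / (2 * b)) * b = -1"
      by (simp add: field_simps)
    with nonneg[of "(a + 1) / (2 * b)"] True show False
      by simp
  qed
  with True show ?thesis
    by simp
next
  case False
  with c have "0 < c"
    by simp
  have "0 \<le> a - 2 * (b / c) * b + (b / c)\<^sup>2 * c"
    by (rule nonneg)
  also have "\<dots> = a - b\<^sup>2 / c"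
    using \<open>0 < c\<close> by (simp add: field_simps power2_eq_square)
  finally show ?thesis
    using \<open>0 < c\<close> by (simp add: field_simps)
qed

section \<open>Quadratic forms and positive semidefinite matrices\<close>

lemma bilinear_form_sum:
  assumes "(A :: real mat) \<in> carrier_mat n n" "x \<in> carrier_vec n" "y \<in> carrier_vec n"
  shows "x \<bullet> (A *\<^sub>v y) = (\<Sum>i<n. \<Sum>j<n. A $$ (i,j) * x $ i * y $ j)"
  using assms by (simp add: scalar_prod_def atLeast0LessThan row_def sum_distrib_left ac_simps)

lemma abs_quadratic_form_le:
  assumes A: "(A :: real mat) \<in> carrier_mat n n" and x: "x \<in> carrier_vec n"
  shows "\<bar>x \<bullet> (A *\<^sub>v x)\<bar> \<le> (\<Sum>i<n. \<Sum>j<n. \<bar>A $$ (i,j)\<bar>) * (x \<bullet> x)"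
proof -
  have entry_sq: "x $ i * x $ i \<le> x \<bullet> x" if "i < n" for i
    using x that unfolding scalar_prod_def by (intro member_le_sum[where f = "\<lambda>j. x $ j * x $ j"]) auto
  have entry_prod: "\<bar>x $ i * x $ j\<bar> \<le> x \<bullet> x" if "i < n" "j < n" for i j
  proof -
    have "\<bar>x $ i * x $ j\<bar> \<le> (x $ i * x $ i + x $ j * x $ j) / 2"
      using sum_squares_bound[of "\<bar>x $ i\<bar>" "\<bar>x $ j\<bar>"] by (simp add: abs_mult power2_eq_square)
    also have "\<dots> \<le> x \<bullet> x"
      using entry_sq[OF that(1)] entry_sq[OF that(2)] by simp
    finally show ?thesis .
  qed
  have "\<bar>x \<bullet> (A *\<^sub>v x)\<bar> \<le> (\<Sum>i<n. \<Sum>j<n. \<bar>A $$ (i,j)\<bar> * \<bar>x $ i * x $ j\<bar>)"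
    unfolding bilinear_form_sum[OF A x x]
    by (rule order.trans[OF sum_abs sum_mono], rule order.trans[OF sum_abs])
       (simp add: abs_mult mult.assoc)
  also have "\<dots> \<le> (\<Sum>i<n. \<Sum>j<n. \<bar>A $$ (i,j)\<bar> * (x \<bullet> x))"
    by (intro sum_mono mult_left_mono entry_prod) auto
  finally show ?thesis
    by (simp add: sum_distrib_right)
qed

lemma psd_transpose: "psd A \<Longrightarrow> transpose_mat A = A"
  by (simp add: psd_def)

lemma psd_quadratic_form_nonneg:
  "psd A \<Longrightarrow> A \<in> carrier_mat n n \<Longrightarrow> x \<in> carrier_vec n \<Longrightarrow> 0 \<le> x \<bullet> (A *\<^sub>v x)"
  by (simp add: psd_def)

lemma psdI:
  assumes "A \<in> carrier_mat n n" "transpose_mat A = A"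
    and "\<And>x. x \<in> carrier_vec n \<Longrightarrow> 0 \<le> x \<bullet> (A *\<^sub>v x)"
  shows "psd A"
  using assms by (auto simp: psd_def)

lemma quadratic_form_congruence:
  assumes A: "(A :: real mat) \<in> carrier_mat m n" and L: "L \<in> carrier_mat m m" and v: "v \<in> carrier_vec n"
  shows "v \<bullet> ((transpose_mat A * L * A) *\<^sub>v v) = (A *\<^sub>v v) \<bullet> (L *\<^sub>v (A *\<^sub>v v))"
proof -
  have "(transpose_mat A * L * A) *\<^sub>v v = (transpose_mat A * L) *\<^sub>v (A *\<^sub>v v)"
    using A L v by (intro assoc_mult_mat_vec) auto
  also have "\<dots> = transpose_mat A *\<^sub>v (L *\<^sub>v (A *\<^sub>v v))"
    using A L v by (intro assoc_mult_mat_vec) auto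
  finally show ?thesis
    using transpose_vec_mult_scalar[of "transpose_mat A" n m "L *\<^sub>v (A *\<^sub>v v)" v] A L v by simp
qed

lemma psd_congruence:
  assumes L: "psd L" "L \<in> carrier_mat m m" and A: "A \<in> carrier_mat m n"
  shows "psd (transpose_mat A * L * A)"
proof (rule psdI)
  show "transpose_mat A * L * A \<in> carrier_mat n n"
    using L A by simp
  have "transpose_mat (transpose_mat A * L * A) = transpose_mat A * transpose_mat (transpose_mat A * L)"
    using L A by (intro transpose_mult) auto
  also have "transpose_mat (transpose_mat A * L) = L * A"
    using L A by (simp add: transpose_mult[of _ n m] psd_transpose)
  finally show "transpose_mat (transpose_mat A * L * A) = transpose_mat A * L * A"
    using L A by (simp add: assoc_mult_mat[of _ n m])
  show "0 \<le> x \<bullet> ((transpose_mat A * L * A) *\<^sub>v x)" if "x \<in> carrier_vec n" for x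
    unfolding quadratic_form_congruence[OF A L(2) that]
    using L A that by (simp add: psd_quadratic_form_nonneg)
qed

lemma psd_one: "psd (1\<^sub>m n)"
  by (rule psdI) (auto simp: scalar_prod_self_nonneg)

lemma psd_mult_transpose: "A \<in> carrier_mat m n \<Longrightarrow> psd (A * transpose_mat A)"
  using psd_congruence[of "1\<^sub>m n" n "transpose_mat A" m] psd_one by simp

lemma psd_diag_nonneg:
  assumes "psd L" "L \<in> carrier_mat n n" "i < n"
  shows "0 \<le> L $$ (i,i)"
  using psd_quadratic_form_nonneg[OF assms(1,2) unit_vec_carrier[of n i]] assms(2,3) by simp

lemma psd_diagonal_mat:
  assumes diag: "diagonal_mat L" and L: "L \<in> carrier_mat n n"
    and nonneg: "\<And>i. i < n \<Longrightarrow> 0 \<le> L $$ (i,i)"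
  shows "psd L"
proof (rule psdI[OF L])
  have off_diag: "L $$ (i,j) = 0" if "i < n" "j < n" "i \<noteq> j" for i j
    using diag L that by (auto simp: diagonal_mat_def)
  show "transpose_mat L = L"
    using L off_diag by (intro eq_matI) (auto, metis)
  fix x :: "real vec"
  assume x: "x \<in> carrier_vec n"
  have "x \<bullet> (L *\<^sub>v x) = (\<Sum>i<n. \<Sum>j<n. if j = i then L $$ (i,i) * x $ i * x $ i else 0)"
    unfolding bilinear_form_sum[OF L x x] by (intro sum.cong refl) (auto simp: off_diag)
  also have "\<dots> = (\<Sum>i<n. L $$ (i,i) * (x $ i * x $ i))"
    by (simp add: mult.assoc)
  finally show "0 \<le> x \<bullet> (L *\<^sub>v x)"
    using nonneg by (auto intro!: sum_nonneg)
qed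

lemma psd_lower_block:
  assumes "psd L" "diagonal_mat L" "L \<in> carrier_mat n n"
  shows "psd (lower_block r L)"
proof (rule psd_diagonal_mat)
  show "diagonal_mat (lower_block r L)"
    using assms(2,3) by (auto simp: diagonal_mat_def lower_block_def)
  show "lower_block r L \<in> carrier_mat (n - r) (n - r)"
    using assms(3) by simp
  show "0 \<le> lower_block r L $$ (i,i)" if "i < n - r" for i
    using psd_diag_nonneg[OF assms(1,3), of "r + i"] assms(3) that by (simp add: lower_block_def)
qed

lemma symmetric_bilinear_form_commute:
  assumes N: "(N :: real mat) \<in> carrier_mat n n" "transpose_mat N = N"
    and y: "y \<in> carrier_vec n" and z: "z \<in> carrier_vec n"
  shows "z \<bullet> (N *\<^sub>v y) = y \<bullet> (N *\<^sub>v z)"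
  using transpose_vec_mult_scalar[OF N(1) y z] comm_scalar_prod[of "N *\<^sub>v z" n y] N y z by simp

lemma symmetric_quadratic_form_diff_smult:
  assumes N: "(N :: real mat) \<in> carrier_mat n n" "transpose_mat N = N"
    and y: "y \<in> carrier_vec n" and z: "z \<in> carrier_vec n"
  shows "(y - t \<cdot>\<^sub>v z) \<bullet> (N *\<^sub>v (y - t \<cdot>\<^sub>v z))
    = y \<bullet> (N *\<^sub>v y) - 2 * t * (y \<bullet> (N *\<^sub>v z)) + t\<^sup>2 * (z \<bullet> (N *\<^sub>v z))"
proof -
  have "N *\<^sub>v (y - t \<cdot>\<^sub>v z) = N *\<^sub>v y - t \<cdot>\<^sub>v (N *\<^sub>v z)"
    using N y z by (simp add: mult_minus_distrib_mat_vec mult_mat_vec)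
  then have "(y - t \<cdot>\<^sub>v z) \<bullet> (N *\<^sub>v (y - t \<cdot>\<^sub>v z))
      = y \<bullet> (N *\<^sub>v y) - t * (y \<bullet> (N *\<^sub>v z)) - t * (z \<bullet> (N *\<^sub>v y)) + t * t * (z \<bullet> (N *\<^sub>v z))"
    using N y z by (simp add: minus_scalar_prod_distrib[of _ n] scalar_prod_minus_distrib[of _ n] algebra_simps)
  then show ?thesis
    using symmetric_bilinear_form_commute[OF N y z] by (simp add: power2_eq_square)
qed

lemma psd_cauchy_schwarz:
  assumes N: "psd N" "N \<in> carrier_mat n n" and y: "y \<in> carrier_vec n" and z: "z \<in> carrier_vec n"
  shows "(y \<bullet> (N *\<^sub>v z))\<^sup>2 \<le> (y \<bullet> (N *\<^sub>v y)) * (z \<bullet> (N *\<^sub>v z))"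
proof (rule quadratic_nonneg_imp_discriminant_le)
  fix t :: real
  have "0 \<le> (y - t \<cdot>\<^sub>v z) \<bullet> (N *\<^sub>v (y - t \<cdot>\<^sub>v z))"
    using N y z by (intro psd_quadratic_form_nonneg) auto
  then show "0 \<le> y \<bullet> (N *\<^sub>v y) - 2 * t * (y \<bullet> (N *\<^sub>v z)) + t\<^sup>2 * (z \<bullet> (N *\<^sub>v z))"
    using symmetric_quadratic_form_diff_smult[OF N(2) psd_transpose[OF N(1)] y z] by simp
qed (rule psd_quadratic_form_nonneg[OF N z])

lemma cauchy_schwarz:
  assumes "(x :: real vec) \<in> carrier_vec n" "y \<in> carrier_vec n"
  shows "(x \<bullet> y)\<^sup>2 \<le> (x \<bullet> x) * (y \<bullet> y)"
  using psd_cauchy_schwarz[OF psd_one one_carrier_mat assms] assms by simp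

lemma abs_scalar_prod_le_vnorm:
  assumes "(x :: real vec) \<in> carrier_vec n" "y \<in> carrier_vec n"
  shows "\<bar>x \<bullet> y\<bar> \<le> vnorm x * vnorm y"
proof -
  have "sqrt ((x \<bullet> y)\<^sup>2) \<le> sqrt ((x \<bullet> x) * (y \<bullet> y))"
    using cauchy_schwarz[OF assms] by (rule real_sqrt_le_mono)
  then show ?thesis
    by (simp add: vnorm_def real_sqrt_mult)
qed

lemma psd_quadratic_form_diff_le:
  assumes N: "psd N" "N \<in> carrier_mat n n" and u: "u \<in> carrier_vec n" and w: "w \<in> carrier_vec n"
  shows "(u - w) \<bullet> (N *\<^sub>v (u - w)) \<le> 2 * (u \<bullet> (N *\<^sub>v u)) + 2 * (w \<bullet> (N *\<^sub>v w))"
proof -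
  note expand = symmetric_quadratic_form_diff_smult[OF N(2) psd_transpose[OF N(1)] u w]
  have "0 \<le> (u - (-1) \<cdot>\<^sub>v w) \<bullet> (N *\<^sub>v (u - (-1) \<cdot>\<^sub>v w))"
    using N u w by (intro psd_quadratic_form_nonneg) auto
  then show ?thesis
    using expand[of 1] expand[of "-1"] by simp
qed

lemma psd_coercive_of_right_inverse:
  assumes N: "psd N" "N \<in> carrier_mat n n" and Q: "Q \<in> carrier_mat n n" "N * Q = 1\<^sub>m n"
  shows "\<exists>c > 0. \<forall>y \<in> carrier_vec n. c * (y \<bullet> y) \<le> y \<bullet> (N *\<^sub>v y)"
proof -
  define D where "D = (\<Sum>i<n. \<Sum>j<n. \<bar>Q $$ (i,j)\<bar>) + 1"
  have "0 < D"
    unfolding D_def by (simp add: add_nonneg_pos sum_nonneg)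
  have "y \<bullet> y \<le> D * (y \<bullet> (N *\<^sub>v y))" if y: "y \<in> carrier_vec n" for y
  proof -
    define z where "z = Q *\<^sub>v y"
    have z: "z \<in> carrier_vec n"
      unfolding z_def using Q y by simp
    have Nz: "N *\<^sub>v z = y"
      unfolding z_def using N Q y by (metis assoc_mult_mat_vec one_mult_mat_vec)
    have "z \<bullet> (N *\<^sub>v z) = y \<bullet> (Q *\<^sub>v y)"
      unfolding Nz unfolding z_def using Q y by (intro comm_scalar_prod[of _ n]) auto
    also have "\<dots> \<le> D * (y \<bullet> y)"
      using abs_quadratic_form_le[OF Q(1) y] scalar_prod_self_nonneg[of y] unfolding D_def
      by (simp add: algebra_simps)
    finally have zNz: "z \<bullet> (N *\<^sub>v z) \<le> D * (y \<bullet> y)" .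
    have "(y \<bullet> y)\<^sup>2 \<le> (y \<bullet> (N *\<^sub>v y)) * (z \<bullet> (N *\<^sub>v z))"
      using psd_cauchy_schwarz[OF N y z] unfolding Nz .
    also have "\<dots> \<le> (y \<bullet> (N *\<^sub>v y)) * (D * (y \<bullet> y))"
      using zNz psd_quadratic_form_nonneg[OF N y] by (rule mult_left_mono)
    finally have "(y \<bullet> y) * (y \<bullet> y) \<le> (D * (y \<bullet> (N *\<^sub>v y))) * (y \<bullet> y)"
      by (simp add: power2_eq_square ac_simps)
    then show ?thesis
      using scalar_prod_self_nonneg[of y] psd_quadratic_form_nonneg[OF N y] \<open>0 < D\<close>
      by (cases "y \<bullet> y = 0") simp_all
  qed
  then have "\<forall>y \<in> carrier_vec n. 1 / D * (y \<bullet> y) \<le> y \<bullet> (N *\<^sub>v y)"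
    using \<open>0 < D\<close> by (simp add: field_simps)
  with \<open>0 < D\<close> show ?thesis
    by (intro exI[of _ "1 / D"]) simp
qed

section \<open>The smallest eigenvalue and the Rayleigh quotient\<close>

lemma quadratic_form_char_matrix:
  assumes M: "(M :: real mat) \<in> carrier_mat n n" and y: "y \<in> carrier_vec n"
  shows "y \<bullet> (char_matrix M \<mu> *\<^sub>v y) = y \<bullet> (M *\<^sub>v y) - \<mu> * (y \<bullet> y)"
proof -
  have "((- \<mu>) \<cdot>\<^sub>m 1\<^sub>m n) *\<^sub>v y = (- \<mu>) \<cdot>\<^sub>v y"
    using y by (intro eq_vecI) auto
  then have "char_matrix M \<mu> *\<^sub>v y = M *\<^sub>v y + (- \<mu>) \<cdot>\<^sub>v y"
    using M y by (simp add: char_matrix_def add_mult_distrib_mat_vec[of _ n n])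
  then show ?thesis
    using M y by (simp add: scalar_prod_add_distrib[of _ n])
qed

lemma psd_char_matrix:
  assumes M: "(M :: real mat) \<in> carrier_mat n n" "transpose_mat M = M"
    and below: "\<And>y. y \<in> carrier_vec n \<Longrightarrow> \<mu> * (y \<bullet> y) \<le> y \<bullet> (M *\<^sub>v y)"
  shows "psd (char_matrix M \<mu>)"
proof (rule psdI)
  show "char_matrix M \<mu> \<in> carrier_mat n n"
    using M by simp
  show "transpose_mat (char_matrix M \<mu>) = char_matrix M \<mu>"
    using M by (intro eq_matI) (auto simp: char_matrix_def, metis index_transpose_mat(1) carrier_matD)
  show "0 \<le> y \<bullet> (char_matrix M \<mu> *\<^sub>v y)" if "y \<in> carrier_vec n" for y
    using below[OF that] quadratic_form_char_matrix[OF M(1) that] by simp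
qed

definition rayleigh_quotients :: "real mat \<Rightarrow> real set" where
  "rayleigh_quotients M =
    {y \<bullet> (M *\<^sub>v y) / (y \<bullet> y) | y. y \<in> carrier_vec (dim_col M) \<and> y \<noteq> 0\<^sub>v (dim_col M)}"

lemma rayleigh_quotients_bdd_below:
  assumes M: "(M :: real mat) \<in> carrier_mat n n"
  shows "bdd_below (rayleigh_quotients M)"
proof
  fix q
  assume "q \<in> rayleigh_quotients M"
  then obtain y where y: "y \<in> carrier_vec n" "y \<noteq> 0\<^sub>v n" and q: "q = y \<bullet> (M *\<^sub>v y) / (y \<bullet> y)"
    using M unfolding rayleigh_quotients_def by auto
  have "- (\<Sum>i<n. \<Sum>j<n. \<bar>M $$ (i,j)\<bar>) * (y \<bullet> y) \<le> y \<bullet> (M *\<^sub>v y)"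
    using abs_quadratic_form_le[OF M y(1)] by linarith
  then show "- (\<Sum>i<n. \<Sum>j<n. \<bar>M $$ (i,j)\<bar>) \<le> q"
    unfolding q using scalar_prod_self_pos[OF y] by (simp add: field_simps)
qed

lemma Inf_rayleigh_quotients_le:
  assumes M: "(M :: real mat) \<in> carrier_mat n n" and y: "y \<in> carrier_vec n"
  shows "Inf (rayleigh_quotients M) * (y \<bullet> y) \<le> y \<bullet> (M *\<^sub>v y)"
proof (cases "y = 0\<^sub>v n")
  case True
  then show ?thesis
    using M by simp
next
  case False
  have "Inf (rayleigh_quotients M) \<le> y \<bullet> (M *\<^sub>v y) / (y \<bullet> y)"
    using M y False rayleigh_quotients_bdd_below[OF M]
    by (intro cInf_lower) (auto simp: rayleigh_quotients_def)
  then show ?thesis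
    using scalar_prod_self_pos[OF y False] by (simp add: field_simps)
qed

(* If the infimum were not an eigenvalue, the characteristic matrix there would be invertible and
   positive semidefinite, hence coercive, which would push the infimum up. *)
lemma eigenvalue_Inf_rayleigh_quotients:
  assumes M: "(M :: real mat) \<in> carrier_mat n n" "transpose_mat M = M" and n: "0 < n"
  shows "eigenvalue M (Inf (rayleigh_quotients M))"
proof (rule ccontr)
  define \<mu> where "\<mu> = Inf (rayleigh_quotients M)"
  assume "\<not> eigenvalue M (Inf (rayleigh_quotients M))"
  then have "det (char_matrix M \<mu>) \<noteq> 0"
    unfolding \<mu>_def using eigenvalue_det[OF M(1)] by simp
  from det_non_zero_imp_unit[OF char_matrix_closed[OF M(1)] this, of "()"]
  obtain Q where Q: "Q \<in> carrier_mat n n" "char_matrix M \<mu> * Q = 1\<^sub>m n"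
    by (auto simp: Units_def ring_mat_def)
  have "psd (char_matrix M \<mu>)"
    unfolding \<mu>_def using M Inf_rayleigh_quotients_le[OF M(1)] by (intro psd_char_matrix) auto
  from psd_coercive_of_right_inverse[OF this char_matrix_closed[OF M(1)] Q]
  obtain c where "0 < c"
    and coercive: "\<forall>y \<in> carrier_vec n. c * (y \<bullet> y) \<le> y \<bullet> (char_matrix M \<mu> *\<^sub>v y)"
    by blast
  have "\<mu> + c \<le> q" if "q \<in> rayleigh_quotients M" for q
  proof -
    from that obtain y where y: "y \<in> carrier_vec n" "y \<noteq> 0\<^sub>v n" and q: "q = y \<bullet> (M *\<^sub>v y) / (y \<bullet> y)"
      using M unfolding rayleigh_quotients_def by auto
    have "(\<mu> + c) * (y \<bullet> y) \<le> y \<bullet> (M *\<^sub>v y)"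
      using bspec[OF coercive y(1)] quadratic_form_char_matrix[OF M(1) y(1), of \<mu>]
      by (simp add: algebra_simps)
    then show ?thesis
      unfolding q using scalar_prod_self_pos[OF y] by (simp add: field_simps)
  qed
  moreover have "rayleigh_quotients M \<noteq> {}"
    using M n unfolding rayleigh_quotients_def
    by (auto intro!: exI[of _ "unit_vec n 0"] simp: vec_eq_iff)
  ultimately have "\<mu> + c \<le> \<mu>"
    unfolding \<mu>_def by (intro cInf_greatest)
  with \<open>0 < c\<close> show False
    by simp
qed

lemma finite_eigenvalues: "(A :: real mat) \<in> carrier_mat n n \<Longrightarrow> finite {a. eigenvalue A a}"
  using card_finite_spectrum(1) by (simp add: spectrum_def)

lemma lambda_min_le_quadratic_form:
  assumes M: "(M :: real mat) \<in> carrier_mat n n" "transpose_mat M = M" and y: "y \<in> carrier_vec n"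
  shows "lambda_min M * (y \<bullet> y) \<le> y \<bullet> (M *\<^sub>v y)"
proof (cases "n = 0")
  case True
  then show ?thesis
    using M y by (simp add: scalar_prod_def)
next
  case False
  then have "lambda_min M \<le> Inf (rayleigh_quotients M)"
    unfolding lambda_min_def using finite_eigenvalues[OF M(1)] eigenvalue_Inf_rayleigh_quotients[OF M]
    by (intro Min_le) auto
  then have "lambda_min M * (y \<bullet> y) \<le> Inf (rayleigh_quotients M) * (y \<bullet> y)"
    using scalar_prod_self_nonneg by (rule mult_right_mono)
  also have "\<dots> \<le> y \<bullet> (M *\<^sub>v y)"
    by (rule Inf_rayleigh_quotients_le[OF M(1) y])
  finally show ?thesis .
qed

lemma psd_eigenvalue_nonneg:
  assumes "psd A" "A \<in> carrier_mat n n" "eigenvalue A a"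
  shows "0 \<le> a"
proof -
  from assms(2,3) obtain v where v: "v \<in> carrier_vec n" "v \<noteq> 0\<^sub>v n" "A *\<^sub>v v = a \<cdot>\<^sub>v v"
    unfolding eigenvalue_def eigenvector_def by auto
  have "0 \<le> a * (v \<bullet> v)"
    using psd_quadratic_form_nonneg[OF assms(1,2) v(1)] v by simp
  with scalar_prod_self_pos[OF v(1,2)] show ?thesis
    by (simp add: zero_le_mult_iff)
qed

lemma lambda_min_pos:
  assumes M: "psd M" "M \<in> carrier_mat n n" and n: "0 < n"
    and B: "B \<in> carrier_mat n n" "M * B = 1\<^sub>m n"
  shows "0 < lambda_min M"
proof -
  have "{a. eigenvalue M a} \<noteq> {}"
    using eigenvalue_Inf_rayleigh_quotients[OF M(2) psd_transpose[OF M(1)] n] by auto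
  then have eig: "eigenvalue M (lambda_min M)"
    unfolding lambda_min_def using Min_in[OF finite_eigenvalues[OF M(2)]] by simp
  have "det M * det B = 1"
    using det_mult[OF M(2) B(1)] B(2) by simp
  moreover have "char_matrix M 0 = M"
    using M(2) by (intro eq_matI) (auto simp: char_matrix_def)
  ultimately have "\<not> eigenvalue M 0"
    using eigenvalue_det[OF M(2), of 0] by auto
  with eig psd_eigenvalue_nonneg[OF M(1,2) eig] show ?thesis
    by (cases "lambda_min M = 0") auto
qed

(* Max {} and Min {} are the same unspecified real, so for an empty spectrum the condition
   number is 0 or 1. *)
lemma psd_cond_num_nonneg:
  assumes "psd A" "A \<in> carrier_mat n n"
  shows "0 \<le> cond_num A"
proof (cases "{a. eigenvalue A a} = {}")
  case True
  have "Max ({} :: real set) = Min {}"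
    by (simp add: Max.eq_fold' Min.eq_fold')
  then show ?thesis
    unfolding cond_num_def lambda_max_def lambda_min_def True by simp
next
  case False
  note fin = finite_eigenvalues[OF assms(2)]
  have "0 \<le> lambda_max A" "0 \<le> lambda_min A"
    unfolding lambda_max_def lambda_min_def
    using Max_in[OF fin False] Min_in[OF fin False] psd_eigenvalue_nonneg[OF assms] by auto
  then show ?thesis
    unfolding cond_num_def by simp
qed

section \<open>Spectral norm\<close>

lemma spec_norm_bdd_above:
  assumes A: "(A :: real mat) \<in> carrier_mat m n"
  shows "bdd_above {vnorm (A *\<^sub>v x) | x. x \<in> carrier_vec (dim_col A) \<and> vnorm x = 1}"
proof
  define C where "C = (\<Sum>i<n. \<Sum>j<n. \<bar>(transpose_mat A * A) $$ (i,j)\<bar>)"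
  fix q
  assume "q \<in> {vnorm (A *\<^sub>v x) | x. x \<in> carrier_vec (dim_col A) \<and> vnorm x = 1}"
  then obtain x where x: "x \<in> carrier_vec n" "vnorm x = 1" and q: "q = vnorm (A *\<^sub>v x)"
    using A by auto
  have "q\<^sup>2 = x \<bullet> ((transpose_mat A * 1\<^sub>m m * A) *\<^sub>v x)"
    unfolding q vnorm_power2 quadratic_form_congruence[OF A one_carrier_mat x(1)] using A x by simp
  also have "\<dots> \<le> C"
    using abs_quadratic_form_le[of "transpose_mat A * A" n x] A x vnorm_power2[of x]
    unfolding C_def by auto
  finally show "q \<le> sqrt C"
    using real_le_rsqrt by blast
qed

lemma vnorm_mult_mat_vec_le:
  assumes A: "(A :: real mat) \<in> carrier_mat m n" and x: "x \<in> carrier_vec n"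
  shows "vnorm (A *\<^sub>v x) \<le> spec_norm A * vnorm x"
proof (cases "x = 0\<^sub>v n")
  case True
  then have "A *\<^sub>v x = 0\<^sub>v m"
    using A by (intro eq_vecI) auto
  with True show ?thesis
    by (simp add: vnorm_def)
next
  case False
  then have "0 < vnorm x"
    using scalar_prod_self_pos[OF x] by (simp add: vnorm_def)
  define u where "u = (1 / vnorm x) \<cdot>\<^sub>v x"
  have u: "u \<in> carrier_vec (dim_col A)" "vnorm u = 1"
    unfolding u_def using x A \<open>0 < vnorm x\<close> by (auto simp: vnorm_smult[OF x])
  have "vnorm (A *\<^sub>v u) = vnorm (A *\<^sub>v x) / vnorm x"
    unfolding u_def using A x \<open>0 < vnorm x\<close> by (simp add: mult_mat_vec vnorm_smult[of _ m])
  moreover have "vnorm (A *\<^sub>v u) \<le> spec_norm A"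
    unfolding spec_norm_def using u by (intro cSup_upper[OF _ spec_norm_bdd_above[OF A]]) blast
  ultimately show ?thesis
    using \<open>0 < vnorm x\<close> by (simp add: field_simps) (metis less_imp_le mult.commute mult_left_mono)
qed

lemma spec_norm_nonneg:
  assumes A: "(A :: real mat) \<in> carrier_mat m n" and n: "0 < n"
  shows "0 \<le> spec_norm A"
proof -
  have "vnorm (A *\<^sub>v unit_vec n 0) \<le> spec_norm A"
    unfolding spec_norm_def using A n
    by (intro cSup_upper[OF _ spec_norm_bdd_above[OF A]]) (auto simp: vnorm_def)
  then show ?thesis
    using vnorm_nonneg order.trans by blast
qed

lemma quadratic_form_le_spec_norm:
  assumes A: "(A :: real mat) \<in> carrier_mat n n" and x: "x \<in> carrier_vec n"
  shows "x \<bullet> (A *\<^sub>v x) \<le> spec_norm A * (x \<bullet> x)"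
proof -
  have "x \<bullet> (A *\<^sub>v x) \<le> vnorm x * vnorm (A *\<^sub>v x)"
    using abs_scalar_prod_le_vnorm[of x n "A *\<^sub>v x"] A x by simp
  also have "\<dots> \<le> vnorm x * (spec_norm A * vnorm x)"
    by (intro mult_left_mono vnorm_mult_mat_vec_le[OF A x] vnorm_nonneg)
  also have "\<dots> = spec_norm A * (x \<bullet> x)"
    by (simp add: vnorm_power2[symmetric] power2_eq_square)
  finally show ?thesis .
qed

section \<open>Least-norm solutions and the projected objective\<close>

lemma invertible_mat_right_inverse:
  assumes "invertible_mat A" "A \<in> carrier_mat n n"
  obtains B where "B \<in> carrier_mat n n" "A * B = 1\<^sub>m n"
proof -
  from assms(1) obtain B where AB: "A * B = 1\<^sub>m (dim_row A)" and BA: "B * A = 1\<^sub>m (dim_row B)"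
    unfolding invertible_mat_def inverts_mat_def by auto
  have "B \<in> carrier_mat n n"
    using arg_cong[OF AB, of dim_col] arg_cong[OF BA, of dim_col] assms(2) by auto
  with AB assms(2) show ?thesis
    using that by simp
qed

lemma inverse_quadratic_form_le:
  assumes M: "(M :: real mat) \<in> carrier_mat n n" and "0 < c"
    and coercive: "\<And>w. w \<in> carrier_vec n \<Longrightarrow> c * (w \<bullet> w) \<le> w \<bullet> (M *\<^sub>v w)"
    and y: "y \<in> carrier_vec n" and b: "M *\<^sub>v y = b"
  shows "y \<bullet> b \<le> (b \<bullet> b) / c"
proof -
  have "b \<in> carrier_vec n"
    using M y b by auto
  have lower: "c * (y \<bullet> y) \<le> y \<bullet> b"
    using coercive[OF y] b by simp
  moreover have "0 \<le> c * (y \<bullet> y)"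
    using \<open>0 < c\<close> scalar_prod_self_nonneg[of y] by simp
  ultimately have "0 \<le> y \<bullet> b"
    by linarith
  have "(y \<bullet> b)\<^sup>2 \<le> (y \<bullet> y) * (b \<bullet> b)"
    by (rule cauchy_schwarz[OF y \<open>b \<in> carrier_vec n\<close>])
  also have "\<dots> \<le> (y \<bullet> b) / c * (b \<bullet> b)"
    using lower \<open>0 < c\<close> scalar_prod_self_nonneg[of b]
    by (intro mult_right_mono) (simp_all add: field_simps)
  finally have prod: "(y \<bullet> b) * (y \<bullet> b) \<le> (y \<bullet> b) * ((b \<bullet> b) / c)"
    by (simp add: power2_eq_square)
  show ?thesis
  proof (cases "y \<bullet> b = 0")
    case True
    then show ?thesis
      using \<open>0 < c\<close> scalar_prod_self_nonneg[of b] by simp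
  next
    case False
    with \<open>0 \<le> y \<bullet> b\<close> have "0 < y \<bullet> b"
      by simp
    with prod show ?thesis
      by (rule mult_left_le_imp_le)
  qed
qed

(* The witness is z = S^T (S S^T)^-1 b, whose squared norm is b^T (S S^T)^-1 b. *)
lemma least_norm_solution:
  assumes S: "(S :: real mat) \<in> carrier_mat r k" and inv: "invertible_mat (S * transpose_mat S)"
    and b: "b \<in> carrier_vec r"
  shows "\<exists>z \<in> carrier_vec k. S *\<^sub>v z = b \<and> z \<bullet> z \<le> (b \<bullet> b) / lambda_min (S * transpose_mat S)"
proof (cases "r = 0")
  case True
  then have "S *\<^sub>v 0\<^sub>v k = b"
    using S b by (intro eq_vecI) auto
  with True b show ?thesis
    by (intro bexI[of _ "0\<^sub>v k"]) (auto simp: scalar_prod_def)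
next
  case False
  define M where "M = S * transpose_mat S"
  have M: "M \<in> carrier_mat r r" "psd M"
    unfolding M_def using S by (auto intro: psd_mult_transpose)
  obtain B where B: "B \<in> carrier_mat r r" "M * B = 1\<^sub>m r"
    using invertible_mat_right_inverse[OF inv[folded M_def] M(1)] .
  define y where "y = B *\<^sub>v b"
  define z where "z = transpose_mat S *\<^sub>v y"
  have y: "y \<in> carrier_vec r" and z: "z \<in> carrier_vec k"
    unfolding y_def z_def using B S b by auto
  have "M *\<^sub>v y = b"
    unfolding y_def using M B b by (metis assoc_mult_mat_vec one_mult_mat_vec)
  moreover have "S *\<^sub>v z = M *\<^sub>v y"
    unfolding z_def M_def using S y by (intro assoc_mult_mat_vec[symmetric]) auto
  ultimately have Sz: "S *\<^sub>v z = b"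
    by simp
  have "z \<bullet> z = y \<bullet> b"
    using transpose_vec_mult_scalar[OF S z y] Sz by (simp add: z_def)
  also have "\<dots> \<le> (b \<bullet> b) / lambda_min M"
  proof (rule inverse_quadratic_form_le[OF M(1) _ _ y \<open>M *\<^sub>v y = b\<close>])
    show "0 < lambda_min M"
      using lambda_min_pos[OF M(2,1) _ B] False by simp
    show "lambda_min M * (w \<bullet> w) \<le> w \<bullet> (M *\<^sub>v w)" if "w \<in> carrier_vec r" for w
      using lambda_min_le_quadratic_form[OF M(1) psd_transpose[OF M(2)] that] .
  qed
  finally show ?thesis
    using z Sz unfolding M_def by blast
qed

lemma least_norm_solution_quadratic_form_le:
  assumes S: "(S :: real mat) \<in> carrier_mat r k" and "r \<le> k"
    and inv: "invertible_mat (S * transpose_mat S)" and b: "b \<in> carrier_vec r"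
    and M: "M \<in> carrier_mat k k"
  obtains z where "z \<in> carrier_vec k" "S *\<^sub>v z = b"
    "z \<bullet> (M *\<^sub>v z) \<le> spec_norm M / lambda_min (S * transpose_mat S) * (vnorm b)\<^sup>2"
proof -
  obtain z where z: "z \<in> carrier_vec k" "S *\<^sub>v z = b"
    and z_norm: "z \<bullet> z \<le> (b \<bullet> b) / lambda_min (S * transpose_mat S)"
    using least_norm_solution[OF S inv b] by blast
  have "z \<bullet> (M *\<^sub>v z) \<le> spec_norm M * (z \<bullet> z)"
    by (rule quadratic_form_le_spec_norm[OF M z(1)])
  also have "\<dots> \<le> spec_norm M / lambda_min (S * transpose_mat S) * (vnorm b)\<^sup>2"
  proof (cases "k = 0")
    case True
    \<comment> \<open>the spectral norm of a matrix without columns is \<open>Sup {}\<close>, of unknown sign\<close>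
    then show ?thesis
      using \<open>r \<le> k\<close> z b by (simp add: scalar_prod_def vnorm_def)
  next
    case False
    then have "0 \<le> spec_norm M"
      by (intro spec_norm_nonneg[OF M]) simp
    from mult_left_mono[OF z_norm this] show ?thesis
      by (simp add: vnorm_power2)
  qed
  finally show ?thesis
    using that z by blast
qed

lemma transpose_mult_residual:
  assumes "(V :: real mat) \<in> carrier_mat p m" "S \<in> carrier_mat p k" "beta \<in> carrier_vec p" "z \<in> carrier_vec k"
  shows "transpose_mat V *\<^sub>v (beta - S *\<^sub>v z) = transpose_mat V *\<^sub>v beta - (transpose_mat V * S) *\<^sub>v z"
  using assms by (simp add: mult_minus_distrib_mat_vec[of _ m p] assoc_mult_mat_vec[of _ m p])

lemma projected_objective_le:
  assumes V: "(V :: real mat) \<in> carrier_mat p m" and L: "psd L" "L \<in> carrier_mat m m"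
    and S: "S \<in> carrier_mat p k" and beta: "beta \<in> carrier_vec p" and z: "z \<in> carrier_vec k"
  shows "(beta - S *\<^sub>v z) \<bullet> ((V * L * transpose_mat V) *\<^sub>v (beta - S *\<^sub>v z))
    \<le> 2 * ((transpose_mat V *\<^sub>v beta) \<bullet> (L *\<^sub>v (transpose_mat V *\<^sub>v beta)))
      + 2 * (z \<bullet> ((transpose_mat (transpose_mat V * S) * L * (transpose_mat V * S)) *\<^sub>v z))"
proof -
  define S2 where "S2 = transpose_mat V * S"
  define b2 where "b2 = transpose_mat V *\<^sub>v beta"
  have S2: "S2 \<in> carrier_mat m k" and b2: "b2 \<in> carrier_vec m"
    unfolding S2_def b2_def using V S beta by auto
  have "(beta - S *\<^sub>v z) \<bullet> ((V * L * transpose_mat V) *\<^sub>v (beta - S *\<^sub>v z))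
      = (b2 - S2 *\<^sub>v z) \<bullet> (L *\<^sub>v (b2 - S2 *\<^sub>v z))"
    using quadratic_form_congruence[of "transpose_mat V" m p L "beta - S *\<^sub>v z"] V L S beta z
    by (simp add: transpose_mult_residual S2_def b2_def)
  also have "\<dots> \<le> 2 * (b2 \<bullet> (L *\<^sub>v b2)) + 2 * ((S2 *\<^sub>v z) \<bullet> (L *\<^sub>v (S2 *\<^sub>v z)))"
    using S2 z by (intro psd_quadratic_form_diff_le[OF L b2]) auto
  also have "(S2 *\<^sub>v z) \<bullet> (L *\<^sub>v (S2 *\<^sub>v z)) = z \<bullet> ((transpose_mat S2 * L * S2) *\<^sub>v z)"
    by (rule quadratic_form_congruence[OF S2 L(2) z, symmetric])
  finally show ?thesis
    unfolding S2_def b2_def .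
qed

lemma psd_eigenvalue_matrix:
  assumes "psd A" "A = U * Lam * transpose_mat U" "transpose_mat U * U = 1\<^sub>m p"
    and "A \<in> carrier_mat p p" "U \<in> carrier_mat p p" "Lam \<in> carrier_mat p p"
  shows "psd Lam"
proof -
  have "transpose_mat U * A * U = (transpose_mat U * U) * Lam * (transpose_mat U * U)"
    using assms(2,4-6) by (simp add: assoc_mult_mat[of _ p p _ p _ p])
  then have "transpose_mat U * A * U = Lam"
    using assms(3,6) by simp
  with psd_congruence[OF assms(1,4,5)] show ?thesis
    by simp
qed

lemma le_one_plus_cond_num_mult:
  assumes "psd A" "A \<in> carrier_mat m m" "psd B" "B \<in> carrier_mat n n" and "0 \<le> x"
  shows "x \<le> (1 + cond_num A * cond_num B) * x"
  using psd_cond_num_nonneg[OF assms(1,2)] psd_cond_num_nonneg[OF assms(3,4)] assms(5)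
  by (simp add: distrib_right)

theorem lemma2:
  fixes p k r :: nat and Sigma U Lam S :: "real mat" and beta xi :: "real vec"
  assumes dims: "Sigma \<in> carrier_mat p p" "U \<in> carrier_mat p p" "Lam \<in> carrier_mat p p"
      "S \<in> carrier_mat p k" "beta \<in> carrier_vec p"
    and psd: "psd Sigma"
    and eig: "Sigma = U * Lam * transpose_mat U"
    and orth: "transpose_mat U * U = 1\<^sub>m p" "U * transpose_mat U = 1\<^sub>m p"
    and diag: "diagonal_mat Lam"
    and nonincr: "\<And>i j. i \<le> j \<Longrightarrow> j < p \<Longrightarrow> Lam $$ (j,j) \<le> Lam $$ (i,i)"
    and rk: "r \<le> k" "r \<le> p"
    and inv1: "invertible_mat ((transpose_mat (first_cols r U) * S)
                 * transpose_mat (transpose_mat (first_cols r U) * S))"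
    and inv2: "invertible_mat (transpose_mat (transpose_mat (last_cols r U) * S)
                 * lower_block r Lam * (transpose_mat (last_cols r U) * S))"
    and xi_dim: "xi \<in> carrier_vec k"
    and xi_feas: "transpose_mat (first_cols r U) *\<^sub>v (beta - S *\<^sub>v xi) = 0\<^sub>v r"
    and xi_min: "\<And>z. z \<in> carrier_vec k \<Longrightarrow>
        transpose_mat (first_cols r U) *\<^sub>v (beta - S *\<^sub>v z) = 0\<^sub>v r \<Longrightarrow>
        (beta - S *\<^sub>v xi) \<bullet> ((last_cols r U * lower_block r Lam * transpose_mat (last_cols r U))
            *\<^sub>v (beta - S *\<^sub>v xi))
        \<le> (beta - S *\<^sub>v z) \<bullet> ((last_cols r U * lower_block r Lam * transpose_mat (last_cols r U))
            *\<^sub>v (beta - S *\<^sub>v z))"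
  shows "let Ur = first_cols r U; Upr = last_cols r U; Lpr = lower_block r Lam;
             Sig_pr = Upr * Lpr * transpose_mat Upr;
             S1 = transpose_mat Ur * S; S2 = transpose_mat Upr * S;
             b1 = transpose_mat Ur *\<^sub>v beta; b2 = transpose_mat Upr *\<^sub>v beta;
             M1 = S1 * transpose_mat S1; M2 = transpose_mat S2 * Lpr * S2;
             L1 = spec_norm M2 / lambda_min M1 * (vnorm b1)\<^sup>2;
             L2 = (1 + cond_num M2 * cond_num M1) * (b2 \<bullet> (Lpr *\<^sub>v b2))
         in (beta - S *\<^sub>v xi) \<bullet> (Sig_pr *\<^sub>v (beta - S *\<^sub>v xi)) \<le> 2 * L1 + 2 * L2"
proof -
  define Ur Upr Lpr where "Ur = first_cols r U" and "Upr = last_cols r U" and "Lpr = lower_block r Lam"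
  define S1 b1 M1 where "S1 = transpose_mat Ur * S" and "b1 = transpose_mat Ur *\<^sub>v beta"
    and "M1 = S1 * transpose_mat S1"
  define M2 where "M2 = transpose_mat (transpose_mat Upr * S) * Lpr * (transpose_mat Upr * S)"
  define q2 where "q2 = (transpose_mat Upr *\<^sub>v beta) \<bullet> (Lpr *\<^sub>v (transpose_mat Upr *\<^sub>v beta))"
  have Ur: "Ur \<in> carrier_mat p r" and Upr: "Upr \<in> carrier_mat p (p - r)"
    and Lpr: "Lpr \<in> carrier_mat (p - r) (p - r)"
    unfolding Ur_def Upr_def Lpr_def using dims by auto
  have S1: "S1 \<in> carrier_mat r k" and b1: "b1 \<in> carrier_vec r"
    unfolding S1_def b1_def using Ur dims by auto
  have Lpr_psd: "psd Lpr"
    unfolding Lpr_def using psd_eigenvalue_matrix[OF psd eig orth(1) dims(1-3)] diag dims(3)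
    by (rule psd_lower_block)
  have M1: "M1 \<in> carrier_mat r r" "psd M1"
    unfolding M1_def using psd_mult_transpose[OF S1] S1 by auto
  have M2: "M2 \<in> carrier_mat k k" "psd M2"
    unfolding M2_def using psd_congruence[OF Lpr_psd Lpr, of "transpose_mat Upr * S" k] Upr Lpr dims
    by auto
  have "0 \<le> q2"
    unfolding q2_def using psd_quadratic_form_nonneg[OF Lpr_psd Lpr] Upr dims by simp
  obtain z where z: "z \<in> carrier_vec k" "S1 *\<^sub>v z = b1"
    and z_bound: "z \<bullet> (M2 *\<^sub>v z) \<le> spec_norm M2 / lambda_min M1 * (vnorm b1)\<^sup>2"
    using least_norm_solution_quadratic_form_le[OF S1 rk(1) inv1[folded Ur_def, folded S1_def] b1 M2(1)]
    unfolding M1_def by blast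
  have "transpose_mat Ur *\<^sub>v (beta - S *\<^sub>v z) = 0\<^sub>v r"
    using transpose_mult_residual[OF Ur dims(4,5) z(1)] z(2) b1 unfolding S1_def b1_def by simp
  then have "(beta - S *\<^sub>v xi) \<bullet> ((Upr * Lpr * transpose_mat Upr) *\<^sub>v (beta - S *\<^sub>v xi))
      \<le> (beta - S *\<^sub>v z) \<bullet> ((Upr * Lpr * transpose_mat Upr) *\<^sub>v (beta - S *\<^sub>v z))"
    using xi_min[OF z(1)] unfolding Ur_def Upr_def Lpr_def by simp
  also have "\<dots> \<le> 2 * q2 + 2 * (z \<bullet> (M2 *\<^sub>v z))"
    unfolding q2_def M2_def using Lpr_psd Upr Lpr dims z by (intro projected_objective_le) auto
  also have "\<dots> \<le> 2 * (spec_norm M2 / lambda_min M1 * (vnorm b1)\<^sup>2) + 2 * ((1 + cond_num M2 * cond_num M1) * q2)"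
    using z_bound le_one_plus_cond_num_mult[OF M2(2,1) M1(2,1) \<open>0 \<le> q2\<close>] by linarith
  finally show ?thesis
    unfolding Let_def Ur_def Upr_def Lpr_def S1_def b1_def M1_def M2_def q2_def .
qed

end
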